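(* Let $p>2$ be an odd prime and $q=p^\ell$ with $\ell\geq 1$. Let $\widetilde{\mathbb{F}}$ be a field of characteristic $p$ and $f:\mathbb{F}_q\to\widetilde{\mathbb{F}}$ an SD-map. Then $f(\mathbb{F}_q)$ is the unique subfield of $\widetilde{\mathbb{F}}$ of order $q$ (in particular, such a subfield exists).
   Context: $\mathbb{F}_q$ is the finite field with $q$ elements. A map $f:\mathbb{F}\to\widetilde{\mathbb{F}}$ between fields is called an SD-map if for all $x\neq y$ in $\mathbb{F}$ one has $f(x)\neq f(y)$ and \[ f\left(\frac{x+y}{x-y}\right)=\frac{f(x)+f(y)}{f(x)-f(y)}. \] *)

theory Defs
  imports "HOL-Computational_Algebra.Primes"
begin

definition sd_map :: "('a::field \<Rightarrow> 'b::field) \<Rightarrow> bool" where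
  "sd_map f \<longleftrightarrow> (\<forall>x y. x \<noteq> y \<longrightarrow>
      f x \<noteq> f y \<and> f ((x + y) / (x - y)) = (f x + f y) / (f x - f y))"

definition is_subfield :: "'b::field set \<Rightarrow> bool" where
  "is_subfield S \<longleftrightarrow> 0 \<in> S \<and> 1 \<in> S \<and>
     (\<forall>x\<in>S. \<forall>y\<in>S. x + y \<in> S \<and> x * y \<in> S) \<and>
     (\<forall>x\<in>S. - x \<in> S) \<and> (\<forall>x\<in>S. x \<noteq> 0 \<longrightarrow> inverse x \<in> S)"

end

theory Submission
  imports Defs "HOL-Computational_Algebra.Polynomial"
begin

text \<open>An SD-map sends 0 to 0 and 1 to 1 (this uses a third point and
  \<open>2 \<noteq> 0\<close>), and comparing the SD-identity at \<open>(x, y)\<close> with the one at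
  \<open>(x / y, 1)\<close> shows that it is multiplicative. Its image \<open>A\<close> is thus a
  finite multiplicatively closed set containing 0 with \<open>q\<close> elements, so
  every element of \<open>A\<close> is a root of \<open>X\<^sup>q - X\<close>; as this polynomial has at
  most \<open>q\<close> roots, \<open>A\<close> is exactly its root set. In characteristic \<open>p\<close> with
  \<open>q\<close> a power of \<open>p\<close> that root set is a subfield, and the same counting
  argument identifies every subfield of order \<open>q\<close> with it.\<close>

lemma mult_closed_power_card_Diff_zero:
  fixes A :: "'b::field set"
  assumes "finite A" and mult: "\<And>x y. x \<in> A \<Longrightarrow> y \<in> A \<Longrightarrow> x * y \<in> A"
    and "s \<in> A" "s \<noteq> 0"
  shows "s ^ card (A - {0}) = 1"
proof -
  define B where "B = A - {0}"
  have "finite B" using \<open>finite A\<close> by (simp add: B_def)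
  have inj: "inj_on ((*) s) B" using \<open>s \<noteq> 0\<close> by (auto simp: inj_on_def)
  have "(*) s ` B \<subseteq> B" using mult \<open>s \<in> A\<close> \<open>s \<noteq> 0\<close> by (auto simp: B_def)
  then have perm: "(*) s ` B = B"
    using card_image[OF inj] \<open>finite B\<close> card_subset_eq by blast
  have "\<Prod>B = \<Prod>((*) s ` B)" using perm by simp
  also have "\<dots> = (\<Prod>x\<in>B. s * x)" using prod.reindex[OF inj] by simp
  also have "\<dots> = s ^ card B * \<Prod>B" by (simp add: prod.distrib)
  finally have "\<Prod>B = s ^ card B * \<Prod>B" .
  moreover have "\<Prod>B \<noteq> 0" using \<open>finite B\<close> by (simp add: B_def)
  ultimately show ?thesis by (simp add: B_def)
qed

lemma mult_closed_power_card:
  fixes A :: "'b::field set"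
  assumes "finite A" "0 \<in> A" "\<And>x y. x \<in> A \<Longrightarrow> y \<in> A \<Longrightarrow> x * y \<in> A" "s \<in> A"
  shows "s ^ card A = s"
proof (cases "s = 0")
  case True
  have "card A > 0" using assms(1,2) card_gt_0_iff by blast
  then show ?thesis using True by simp
next
  case False
  have "card A = Suc (card (A - {0}))"
    using assms(1,2) by (metis card_Suc_Diff1)
  then show ?thesis
    using mult_closed_power_card_Diff_zero[OF assms(1,3,4) False] by simp
qed

lemma card_power_fixed_points_le:
  assumes "q \<ge> 2"
  shows "finite {x::'b::field. x ^ q = x}" and "card {x::'b::field. x ^ q = x} \<le> q"
proof -
  define P :: "'b poly" where "P = monom 1 q + [:0, -1:]"
  have "degree P = q"
    using assms unfolding P_def by (subst degree_add_eq_left) (auto simp: degree_monom_eq)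
  then have "P \<noteq> 0" using assms by auto
  have roots: "{x::'b. x ^ q = x} = {x. poly P x = 0}"
    by (simp add: P_def poly_monom)
  show "finite {x::'b::field. x ^ q = x}"
    unfolding roots using poly_roots_finite[OF \<open>P \<noteq> 0\<close>] .
  show "card {x::'b::field. x ^ q = x} \<le> q"
    unfolding roots using card_poly_roots_bound[OF \<open>P \<noteq> 0\<close>] \<open>degree P = q\<close> by simp
qed

lemma mult_closed_eq_power_fixed_points:
  fixes A :: "'b::field set"
  assumes "finite A" "0 \<in> A" "\<And>x y. x \<in> A \<Longrightarrow> y \<in> A \<Longrightarrow> x * y \<in> A" "card A \<ge> 2"
  shows "A = {x. x ^ card A = x}"
proof -
  have sub: "A \<subseteq> {x. x ^ card A = x}"
    using mult_closed_power_card[OF assms(1-3)] by blast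
  show ?thesis
    using card_power_fixed_points_le[OF assms(4)] card_subset_eq[OF _ sub] card_mono[OF _ sub]
    by (metis antisym)
qed

lemma is_subfield_power_fixed_points:
  assumes "prime CHAR('b::field)" and q: "q = CHAR('b) ^ l"
  shows "is_subfield {x::'b. x ^ q = x}"
  unfolding is_subfield_def
proof (intro conjI ballI impI)
  have "q > 0" using q assms(1) by (simp add: prime_gt_0_nat)
  then show "0 \<in> {x::'b. x ^ q = x}" by simp
  have frob_add: "(x + y) ^ q = x ^ q + y ^ q" for x y :: 'b
    using freshmans_dream'[OF assms] .
  fix x assume x: "x \<in> {x::'b. x ^ q = x}"
  have "x ^ q + (- x) ^ q = 0"
    using frob_add[of x "- x"] \<open>q > 0\<close> by (simp add: power_0_left)
  then show "- x \<in> {x::'b. x ^ q = x}" using x by (simp add: add_eq_0_iff)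
  show "inverse x \<in> {x::'b. x ^ q = x}" using x by (simp add: power_inverse)
  fix y assume y: "y \<in> {x::'b. x ^ q = x}"
  show "x * y \<in> {x::'b. x ^ q = x}" using x y by (simp add: power_mult_distrib)
  show "x + y \<in> {x::'b. x ^ q = x}" using x y frob_add by simp
qed simp

lemma finite_subfield_eq_power_fixed_points:
  fixes S :: "'b::field set"
  assumes "is_subfield S" "finite S"
  shows "S = {x. x ^ card S = x}"
proof (rule mult_closed_eq_power_fixed_points)
  have "{0, 1} \<subseteq> S" using assms(1) by (simp add: is_subfield_def)
  then have "card {0, 1::'b} \<le> card S" by (rule card_mono[OF assms(2)])
  then show "card S \<ge> 2" by simp
qed (use assms in \<open>auto simp: is_subfield_def\<close>)

lemma plus_one_div_minus_one_inj:
  fixes u v :: "'b::field"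
  assumes "u \<noteq> 1" "v \<noteq> 1" "(2::'b) \<noteq> 0" "(u + 1) / (u - 1) = (v + 1) / (v - 1)"
  shows "u = v"
proof -
  have "(u + 1) * (v - 1) = (v + 1) * (u - 1)" using assms by (simp add: field_simps)
  then show ?thesis using assms(3) by (auto simp: algebra_simps)
qed

lemma sd_mapD:
  assumes "sd_map f" "x \<noteq> y"
  shows "f x \<noteq> f y" and "f ((x + y) / (x - y)) = (f x + f y) / (f x - f y)"
  using assms unfolding sd_map_def by blast+

lemma sd_map_inj: "sd_map f \<Longrightarrow> inj f"
  by (auto simp: inj_def dest: sd_mapD(1))

lemma sd_map_zero_one:
  fixes f :: "'a::field \<Rightarrow> 'b::field"
  assumes sd: "sd_map f" and "(2::'b) \<noteq> 0" and "(c::'a) \<noteq> 0" "c \<noteq> 1"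
  shows "f 0 = 0" and "f 1 = 1"
proof -
  have at_zero: "f 1 * (f x - f 0) = f x + f 0" if "x \<noteq> 0" for x
    using sd_mapD[OF sd that] that by (simp add: field_simps)
  have "f 1 * (f 1 - f c) = f 1 - f c"
    using at_zero[of 1] at_zero[OF \<open>c \<noteq> 0\<close>] by (simp add: algebra_simps)
  moreover have "f 1 \<noteq> f c" using sd_mapD(1)[OF sd] \<open>c \<noteq> 1\<close> by metis
  ultimately show "f 1 = 1" by simp
  then have "2 * f 0 = 0" using at_zero[of 1] by (simp add: algebra_simps)
  then show "f 0 = 0" using \<open>(2::'b) \<noteq> 0\<close> by simp
qed

lemma sd_map_divide:
  fixes f :: "'a::field \<Rightarrow> 'b::field"
  assumes sd: "sd_map f" and two: "(2::'b) \<noteq> 0" and f0: "f 0 = 0" and f1: "f 1 = 1"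
  shows "f (x / y) = f x / f y"
proof (cases "y = 0 \<or> x = y")
  case True
  then show ?thesis using f0 f1 sd_mapD(1)[OF sd, of _ 0] by auto
next
  case False
  then have "y \<noteq> 0" "x \<noteq> y" by auto
  define t where "t = x / y"
  define u where "u = f x / f y"
  have "f y \<noteq> 0" "f x \<noteq> f y" using sd_mapD(1)[OF sd] f0 \<open>y \<noteq> 0\<close> \<open>x \<noteq> y\<close> by metis+
  have "t \<noteq> 1" using \<open>y \<noteq> 0\<close> \<open>x \<noteq> y\<close> by (simp add: t_def)
  have "u \<noteq> 1" using \<open>f y \<noteq> 0\<close> \<open>f x \<noteq> f y\<close> by (simp add: u_def)
  have "f t \<noteq> 1" using sd_mapD(1)[OF sd \<open>t \<noteq> 1\<close>] f1 by simp
  have "(f t + 1) / (f t - 1) = f ((t + 1) / (t - 1))"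
    using sd_mapD(2)[OF sd \<open>t \<noteq> 1\<close>] f1 by simp
  also have "(t + 1) / (t - 1) = (x + y) / (x - y)"
    using \<open>y \<noteq> 0\<close> \<open>x \<noteq> y\<close> by (simp add: t_def field_simps)
  also have "f \<dots> = (f x + f y) / (f x - f y)"
    using sd_mapD(2)[OF sd \<open>x \<noteq> y\<close>] .
  also have "\<dots> = (u + 1) / (u - 1)"
    using \<open>f y \<noteq> 0\<close> \<open>f x \<noteq> f y\<close> by (simp add: u_def field_simps)
  finally have "f t = u"
    using plus_one_div_minus_one_inj[OF \<open>f t \<noteq> 1\<close> \<open>u \<noteq> 1\<close> two] by blast
  then show ?thesis by (simp add: t_def u_def)
qed

lemma sd_map_mult:
  fixes f :: "'a::field \<Rightarrow> 'b::field"
  assumes "sd_map f" "(2::'b) \<noteq> 0" "f 0 = 0" "f 1 = 1"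
  shows "f (x * y) = f x * f y"
  using sd_map_divide[OF assms, of x "1 / y"] sd_map_divide[OF assms, of 1 y] assms(4)
  by simp

lemma sd_map_range_eq_power_fixed_points:
  fixes f :: "'a::{field,finite} \<Rightarrow> 'b::field"
  assumes sd: "sd_map f" and two: "(2::'b) \<noteq> 0" and "card (UNIV :: 'a set) \<ge> 3"
  shows "range f = {x. x ^ card (UNIV :: 'a set) = x}"
proof -
  have "card {0, 1::'a} \<le> 2" by (simp add: card_insert_le_m1)
  then have "card {0, 1::'a} < card (UNIV :: 'a set)" using assms(3) by linarith
  then have "UNIV \<noteq> {0, 1::'a}" by (metis less_irrefl)
  then obtain c :: 'a where "c \<noteq> 0" "c \<noteq> 1" by blast
  note f01 = sd_map_zero_one[OF sd two this]
  have card_range: "card (range f) = card (UNIV :: 'a set)"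
    using card_image[OF sd_map_inj[OF sd]] by simp
  have "range f = {x. x ^ card (range f) = x}"
  proof (rule mult_closed_eq_power_fixed_points)
    show "x * y \<in> range f" if xy: "x \<in> range f" "y \<in> range f" for x y
    proof -
      obtain a b where "x = f a" "y = f b" using xy by blast
      then show ?thesis using sd_map_mult[OF sd two f01] by (metis rangeI)
    qed
  qed (use f01 card_range assms(3) in \<open>auto intro: range_eqI[of _ _ 0]\<close>)
  then show ?thesis using card_range by simp
qed

theorem lemma3p1:
  fixes f :: "'a::{field,finite} \<Rightarrow> 'b::field"
    and p l q :: nat
  assumes "prime p" and "p > 2" and "l \<ge> 1" and "q = p ^ l"
    and "card (UNIV :: 'a set) = q"
    and "CHAR('b) = p"
    and "sd_map f"
  shows "is_subfield (range f) \<and> card (range f) = q \<and>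
         (\<forall>S. is_subfield S \<and> finite S \<and> card S = q \<longrightarrow> S = range f)"
proof -
  have "\<not> CHAR('b) dvd 2" using assms(2,6) by (auto dest: dvd_imp_le)
  then have two: "(2::'b) \<noteq> 0" using of_nat_eq_0_iff_char_dvd[of 2, where ?'a = 'b] by simp
  have "p ^ 1 \<le> p ^ l" using assms(2,3) by (intro power_increasing) auto
  then have "q \<ge> 3" using assms(2,4) by simp
  then have range_eq: "range f = {x. x ^ q = x}"
    using sd_map_range_eq_power_fixed_points[OF assms(7) two] assms(5) by simp
  have card_range: "card (range f) = q"
    using card_image[OF sd_map_inj[OF assms(7)]] assms(5) by simp
  have "is_subfield (range f)"
    unfolding range_eq using is_subfield_power_fixed_points assms(1,4,6) by blast
  then show ?thesis
    using finite_subfield_eq_power_fixed_points range_eq card_range by auto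
qed

end
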